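(* Problem (RO-$\Sigma$) has a feasible solution with $B\le N(N+1)/2$.
   Context: A ballot style consists of contests $\mathcal{C}=\{1,\ldots,C\}$, candidates $\mathcal{N}=\{1,\ldots,N\}$ partitioned into nonempty sets $\mathcal{N}_c$ ($c\in\mathcal{C}$), and positive integers $v_c$. A filled-out ballot is a subset $\beta\subseteq\mathcal{N}$; $\mathscr{B}=\{\beta\subseteq\mathcal{N}: |\mathcal{N}_c\cap\beta|\le v_c\ \forall c\}$. For $i\in\mathcal{N}_c$: $T^*_i(\beta_1,\ldots,\beta_B)=\sum_{b=1}^B\mathbb{I}\{i\in\beta_b\text{ and }|\mathcal{N}_c\cap\beta_b|\le v_c\}$, and for a bijection $\sigma$ of $\mathcal{N}$, $T^\sigma_i(\beta_1,\ldots,\beta_B)=\sum_{b=1}^B\mathbb{I}\{\sigma(i)\in\beta_b\text{ and }|\{\sigma(j)\in\beta_b: j\in\mathcal{N}_c\}|\le v_c\}$. $\Sigma$ is the set of non-identity bijections $\mathcal{N}\to\mathcal{N}$. Problem (RO-$\Sigma$): minimize $B$ over $B\in\mathbb{N}$ and $\beta_1,\ldots,\beta_B\in\mathscr{B}$ subject to $T^\sigma(\beta_1,\ldots,\beta_B)\neq T^*(\beta_1,\ldots,\beta_B)$ for all $\sigma\in\Sigma$. *)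

theory Defs
  imports Main
begin

text \<open>Candidates are 1..N; contests are 1..C; ctst i is the contest of candidate i,
  so N_c = {i in {1..N}. ctst i = c}; v c is the vote limit of contest c.\<close>

definition cands :: "nat \<Rightarrow> (nat \<Rightarrow> nat) \<Rightarrow> nat \<Rightarrow> nat set" where
  "cands N ctst c = {i \<in> {1..N}. ctst i = c}"

definition ballot_style :: "nat \<Rightarrow> nat \<Rightarrow> (nat \<Rightarrow> nat) \<Rightarrow> (nat \<Rightarrow> nat) \<Rightarrow> bool" where
  "ballot_style C N ctst v \<longleftrightarrow>
     (\<forall>i\<in>{1..N}. ctst i \<in> {1..C}) \<and>
     (\<forall>c\<in>{1..C}. cands N ctst c \<noteq> {}) \<and>
     (\<forall>c\<in>{1..C}. v c > 0)"

definition valid_ballots :: "nat \<Rightarrow> nat \<Rightarrow> (nat \<Rightarrow> nat) \<Rightarrow> (nat \<Rightarrow> nat) \<Rightarrow> nat set set" where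
  "valid_ballots C N ctst v =
     {\<beta>. \<beta> \<subseteq> {1..N} \<and> (\<forall>c\<in>{1..C}. card (cands N ctst c \<inter> \<beta>) \<le> v c)}"

definition T_star :: "nat \<Rightarrow> (nat \<Rightarrow> nat) \<Rightarrow> (nat \<Rightarrow> nat) \<Rightarrow> nat set list \<Rightarrow> nat \<Rightarrow> nat" where
  "T_star N ctst v bs i =
     (\<Sum>b<length bs. if i \<in> bs ! b \<and> card (cands N ctst (ctst i) \<inter> bs ! b) \<le> v (ctst i)
                      then 1 else 0)"

definition T_sigma :: "nat \<Rightarrow> (nat \<Rightarrow> nat) \<Rightarrow> (nat \<Rightarrow> nat) \<Rightarrow> (nat \<Rightarrow> nat) \<Rightarrow> nat set list \<Rightarrow> nat \<Rightarrow> nat" where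
  "T_sigma N ctst v \<sigma> bs i =
     (\<Sum>b<length bs. if \<sigma> i \<in> bs ! b \<and>
                         card {\<sigma> j | j. j \<in> cands N ctst (ctst i) \<and> \<sigma> j \<in> bs ! b} \<le> v (ctst i)
                      then 1 else 0)"

definition Sigma_perms :: "nat \<Rightarrow> (nat \<Rightarrow> nat) set" where
  "Sigma_perms N = {\<sigma>. bij_betw \<sigma> {1..N} {1..N} \<and> (\<exists>i\<in>{1..N}. \<sigma> i \<noteq> i)}"

definition RO_feasible :: "nat \<Rightarrow> nat \<Rightarrow> (nat \<Rightarrow> nat) \<Rightarrow> (nat \<Rightarrow> nat) \<Rightarrow> nat set list \<Rightarrow> bool" where
  "RO_feasible C N ctst v bs \<longleftrightarrow>
     set bs \<subseteq> valid_ballots C N ctst v \<and>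
     (\<forall>\<sigma>\<in>Sigma_perms N. \<exists>i\<in>{1..N}. T_sigma N ctst v \<sigma> bs i \<noteq> T_star N ctst v bs i)"

end

theory Submission
  imports Defs
begin

text \<open>Cast, for each candidate k, exactly k ballots containing only k. On singleton ballots
  no overvote can occur, so the tally of candidate i is i, while under a relabelling \<sigma>
  it becomes \<sigma> i; any non-identity \<sigma> therefore changes some tally. The number of
  ballots is 1 + 2 + \<dots> + N = N(N+1)/2.\<close>

definition staircase_ballots :: "nat \<Rightarrow> nat set list" where
  "staircase_ballots N = concat (map (\<lambda>k. replicate k {k}) [1..<N+1])"

lemma staircase_ballots_Suc:
  "staircase_ballots (Suc N) = staircase_ballots N @ replicate (Suc N) {Suc N}"
  by (simp add: staircase_ballots_def)

lemma length_staircase_ballots: "length (staircase_ballots N) = N * (N + 1) div 2"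
  by (induction N) (simp_all add: staircase_ballots_def)

lemma set_staircase_ballots: "set (staircase_ballots N) = (\<lambda>k. {k}) ` {1..N}"
  by (auto simp: staircase_ballots_def)

lemma count_member_staircase_ballots:
  "length (filter ((\<in>) x) (staircase_ballots N)) = (if x \<in> {1..N} then x else 0)"
  by (induction N) (auto simp: staircase_ballots_Suc staircase_ballots_def)

lemma sum_indicator_nth_eq_length_filter:
  "(\<Sum>b<length xs. if P (xs ! b) then 1 else 0) = length (filter P xs)"
  by (induction xs rule: rev_induct) (auto simp: nth_append)

lemma T_star_singleton_ballots:
  assumes "\<forall>\<beta>\<in>set bs. is_singleton \<beta>" and "v (ctst i) > 0"
  shows "T_star N ctst v bs i = length (filter ((\<in>) i) bs)"
proof -
  have "card (cands N ctst (ctst i) \<inter> \<beta>) \<le> v (ctst i)" if "\<beta> \<in> set bs" for \<beta>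
  proof -
    have "is_singleton \<beta>" using assms(1) that by blast
    then obtain k where "\<beta> = {k}" by (rule is_singletonE)
    then have "card (cands N ctst (ctst i) \<inter> \<beta>) \<le> 1" by (simp add: card_le_Suc0_iff_eq)
    with assms(2) show ?thesis by linarith
  qed
  then show ?thesis
    unfolding T_star_def
    by (subst sum_indicator_nth_eq_length_filter[where P = "(\<in>) i", symmetric])
       (auto intro!: sum.cong)
qed

lemma T_sigma_singleton_ballots:
  assumes "\<forall>\<beta>\<in>set bs. is_singleton \<beta>" and "v (ctst i) > 0"
  shows "T_sigma N ctst v \<sigma> bs i = length (filter ((\<in>) (\<sigma> i)) bs)"
proof -
  have "card {\<sigma> j | j. j \<in> cands N ctst (ctst i) \<and> \<sigma> j \<in> \<beta>} \<le> v (ctst i)"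
    if "\<beta> \<in> set bs" for \<beta>
  proof -
    have "is_singleton \<beta>" using assms(1) that by blast
    then obtain k where k: "\<beta> = {k}" by (rule is_singletonE)
    have "card {\<sigma> j | j. j \<in> cands N ctst (ctst i) \<and> \<sigma> j \<in> \<beta>} \<le> card \<beta>"
      by (rule card_mono) (auto simp: k)
    with assms(2) k show ?thesis by simp
  qed
  then show ?thesis
    unfolding T_sigma_def
    by (subst sum_indicator_nth_eq_length_filter[where P = "(\<in>) (\<sigma> i)", symmetric])
       (auto intro!: sum.cong)
qed

lemma singleton_valid_ballot:
  assumes "ballot_style C N ctst v" and "k \<in> {1..N}"
  shows "{k} \<in> valid_ballots C N ctst v"
proof -
  have "card (cands N ctst c \<inter> {k}) \<le> v c" if "c \<in> {1..C}" for c
  proof -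
    have "card (cands N ctst c \<inter> {k}) \<le> 1" by (simp add: card_le_Suc0_iff_eq)
    with assms(1) that show ?thesis unfolding ballot_style_def by fastforce
  qed
  with assms(2) show ?thesis unfolding valid_ballots_def by auto
qed

theorem proposition4:
  fixes C N :: nat and ctst v :: "nat \<Rightarrow> nat"
  assumes "ballot_style C N ctst v"
  shows "\<exists>bs. RO_feasible C N ctst v bs \<and> length bs \<le> N * (N + 1) div 2"
proof (intro exI conjI)
  let ?bs = "staircase_ballots N"
  have singletons: "\<forall>\<beta>\<in>set ?bs. is_singleton \<beta>"
    by (auto simp: set_staircase_ballots)
  have vpos: "v (ctst i) > 0" if "i \<in> {1..N}" for i
    using assms that unfolding ballot_style_def by fastforce
  show "RO_feasible C N ctst v ?bs"
    unfolding RO_feasible_def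
  proof (intro conjI ballI)
    show "set ?bs \<subseteq> valid_ballots C N ctst v"
      using singleton_valid_ballot[OF assms] by (auto simp: set_staircase_ballots)
  next
    fix \<sigma> assume "\<sigma> \<in> Sigma_perms N"
    then obtain i where i: "i \<in> {1..N}" "\<sigma> i \<noteq> i" and "\<sigma> i \<in> {1..N}"
      unfolding Sigma_perms_def by (auto dest: bij_betwE)
    then have "T_sigma N ctst v \<sigma> ?bs i \<noteq> T_star N ctst v ?bs i"
      by (simp add: T_sigma_singleton_ballots T_star_singleton_ballots singletons vpos
                    count_member_staircase_ballots)
    with i(1) show "\<exists>i\<in>{1..N}. T_sigma N ctst v \<sigma> ?bs i \<noteq> T_star N ctst v ?bs i" by blast
  qed
  show "length ?bs \<le> N * (N + 1) div 2" by (simp add: length_staircase_ballots)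
qed

end
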